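(* Let $R$ be a finite chain ring and $S$ its Galois extension of rank $m$ with automorphism $\sigma$, as in the context. Let $a_1,\ldots,a_\ell\in S^*$ be such that $a_i-a_j^\beta\in S^*$ for all $\beta\in S^*$ and all $1\le i<j\le\ell$. Then for every non-zero monic skew polynomial $F\in S[x;\sigma]$, $$\sum_{i=1}^\ell {\rm frk}_R\big(F_{a_i}^{-1}(\mathfrak{M})\big)\le \deg(F),$$ where $F_{a_i}^{-1}(\mathfrak{M})=\{\beta\in S: F_{a_i}(\beta)\in\mathfrak{M}\}$.
   Context: $R$ is a finite commutative chain ring with maximal ideal $\mathfrak{m}$, $q=|R/\mathfrak{m}|$. $S=R[x]/(h)$ with $h\in R[x]$ monic of degree $m$ and irreducible modulo $\mathfrak{m}$; $S$ is local with maximal ideal $\mathfrak{M}=\mathfrak{m}S$, unit group $S^*=S\setminus\mathfrak{M}$, and $S/\mathfrak{M}=\mathbb{F}_{q^m}$. $\sigma$ is a ring automorphism of $S$ generating the Galois group of $R\subseteq S$ (fixed ring $R$), reducing modulo $\mathfrak{M}$ to $y\mapsto y^q$. $S[x;\sigma]$ is the skew polynomial ring with $xa=\sigma(a)x$ for $a\in S$. For $a\in S$, $N_i(a)=\sigma^{i-1}(a)\cdots\sigma(a)a$, $\mathcal{D}_a^i(\beta)=\sigma^i(\beta)N_i(a)$, and for $F=\sum_i F_ix^i$, $F_a(\beta)=\sum_iF_i\mathcal{D}_a^i(\beta)$ (an $R$-linear map $S\to S$). For $\beta\in S^*$, $a^\beta=\sigma(\beta)a\beta^{-1}$. For an $R$-module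 $M$ (or subset of $S$), ${\rm frk}_R(M)$ is the maximum size of an $R$-linearly independent subset of $M$. *)

theory Defs
  imports "HOL-Computational_Algebra.Polynomial"
begin

(* The ambient ring S is the whole (finite) type 's; R is a subring of it. *)

definition subring_of :: "'s::comm_ring_1 set \<Rightarrow> bool" where
  "subring_of R \<longleftrightarrow> 0 \<in> R \<and> 1 \<in> R \<and>
     (\<forall>x\<in>R. \<forall>y\<in>R. x + y \<in> R \<and> x - y \<in> R \<and> x * y \<in> R)"

definition ideal_in :: "'s::comm_ring_1 set \<Rightarrow> 's set \<Rightarrow> bool" where
  "ideal_in R I \<longleftrightarrow> I \<subseteq> R \<and> 0 \<in> I \<and>
     (\<forall>x\<in>I. \<forall>y\<in>I. x + y \<in> I) \<and> (\<forall>r\<in>R. \<forall>x\<in>I. r * x \<in> I)"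

definition finite_chain_ring :: "'s::comm_ring_1 set \<Rightarrow> bool" where
  "finite_chain_ring R \<longleftrightarrow> subring_of R \<and> finite R \<and> (1::'s) \<noteq> 0 \<and>
     (\<forall>I J. ideal_in R I \<longrightarrow> ideal_in R J \<longrightarrow> I \<subseteq> J \<or> J \<subseteq> I)"

definition max_ideal :: "'s::comm_ring_1 set \<Rightarrow> 's set" where
  "max_ideal R = {r \<in> R. \<not> (\<exists>u\<in>R. r * u = 1)}"

definition resfield_card :: "'s::comm_ring_1 set \<Rightarrow> nat" where
  "resfield_card R = card R div card (max_ideal R)"

definition ext_ideal :: "'s::comm_ring_1 set \<Rightarrow> 's set" where
  "ext_ideal R = {\<Sum>i<(n::nat). s i * r i | n s r. \<forall>i<n. r i \<in> max_ideal R}"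

definition poly_over :: "'s::comm_ring_1 set \<Rightarrow> 's poly \<Rightarrow> bool" where
  "poly_over R p \<longleftrightarrow> (\<forall>i. coeff p i \<in> R)"

(* h (monic, coefficients in R) is irreducible modulo \<m>: degree \<ge> 1 and h mod \<m>
   is not a product of two (w.l.o.g. monic) polynomials of positive degree *)
definition irred_mod_max :: "'s::comm_ring_1 set \<Rightarrow> 's poly \<Rightarrow> bool" where
  "irred_mod_max R h \<longleftrightarrow> degree h \<ge> 1 \<and>
     \<not> (\<exists>g k. poly_over R g \<and> poly_over R k \<and> lead_coeff g = 1 \<and> lead_coeff k = 1 \<and>
            degree g \<ge> 1 \<and> degree k \<ge> 1 \<and>
            (\<forall>i. coeff (h - g * k) i \<in> max_ideal R))"

(* S (= UNIV) is R[x]/(h): there is \<theta> with h(\<theta>) = 0 such that every element of S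
   is uniquely an R-combination of 1, \<theta>, ..., \<theta>^(m-1), m = deg h *)
definition is_quotient_by :: "'s::comm_ring_1 set \<Rightarrow> 's poly \<Rightarrow> bool" where
  "is_quotient_by R h \<longleftrightarrow> (\<exists>\<theta>. poly h \<theta> = 0 \<and>
     (\<forall>s. \<exists>!r. (\<forall>i. r i \<in> R) \<and> (\<forall>i\<ge>degree h. r i = 0) \<and>
              s = (\<Sum>i<degree h. r i * \<theta> ^ i)))"

definition ring_aut :: "('s::comm_ring_1 \<Rightarrow> 's) \<Rightarrow> bool" where
  "ring_aut f \<longleftrightarrow> bij f \<and> f 1 = 1 \<and> (\<forall>x y. f (x + y) = f x + f y \<and> f (x * y) = f x * f y)"

definition galois_generator :: "'s::comm_ring_1 set \<Rightarrow> ('s \<Rightarrow> 's) \<Rightarrow> bool" where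
  "galois_generator R \<sigma> \<longleftrightarrow> ring_aut \<sigma> \<and> (\<forall>r\<in>R. \<sigma> r = r) \<and>
     (\<forall>\<tau>. ring_aut \<tau> \<and> (\<forall>r\<in>R. \<tau> r = r) \<longrightarrow> (\<exists>k. \<tau> = (\<sigma> ^^ k))) \<and>
     {y. \<sigma> y = y} = R \<and>
     (\<forall>y. \<sigma> y - y ^ resfield_card R \<in> ext_ideal R)"

definition Nrm :: "('s::comm_ring_1 \<Rightarrow> 's) \<Rightarrow> nat \<Rightarrow> 's \<Rightarrow> 's" where
  "Nrm \<sigma> i a = (\<Prod>j<i. (\<sigma> ^^ j) a)"

definition Dop :: "('s::comm_ring_1 \<Rightarrow> 's) \<Rightarrow> 's \<Rightarrow> nat \<Rightarrow> 's \<Rightarrow> 's" where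
  "Dop \<sigma> a i \<beta> = (\<sigma> ^^ i) \<beta> * Nrm \<sigma> i a"

(* F_a(\<beta>) = \<Sum> F_i D_a^i(\<beta>); a skew polynomial F = \<Sum> F_i x^i in S[x;\<sigma>] is represented
   by its coefficient sequence, stored as an element of 's poly (only coefficients,
   degree and leading coefficient are used, never the commutative product) *)
definition skew_eval :: "('s::comm_ring_1 \<Rightarrow> 's) \<Rightarrow> 's poly \<Rightarrow> 's \<Rightarrow> 's \<Rightarrow> 's" where
  "skew_eval \<sigma> F a \<beta> = (\<Sum>i\<le>degree F. coeff F i * Dop \<sigma> a i \<beta>)"

definition R_indep :: "'s::comm_ring_1 set \<Rightarrow> 's set \<Rightarrow> bool" where
  "R_indep R A \<longleftrightarrow> finite A \<and>
     (\<forall>c. (\<forall>v\<in>A. c v \<in> R) \<longrightarrow> (\<Sum>v\<in>A. c v * v) = 0 \<longrightarrow> (\<forall>v\<in>A. c v = 0))"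

definition frk :: "'s::comm_ring_1 set \<Rightarrow> 's set \<Rightarrow> nat" where
  "frk R X = Max {card A | A. A \<subseteq> X \<and> R_indep R A}"

end

(* Write V_i for the preimage of M under F_(a_i); it is an R-submodule of S
   containing M, and an R-independent subset of V_i of size n gives |V_i| >= |M| q^n, because its
   combinations with coefficients from a set of representatives of R/m stay distinct modulo M.
   It therefore suffices to show prod_i |V_i| <= |M|^l q^(deg F), by induction on deg F. If some
   V_i0 contains a unit beta, divide F on the right by x - b with b = a_i0^beta. The remainder
   lies in M, so V_i(F) is the preimage of V_i(G) under the additive map
   gamma |-> sigma(gamma) a_i - b gamma. Modulo M, its kernel is M itself for i <> i0 (this is the
   non-conjugacy hypothesis), and for i = i0 it consists of the gamma = delta beta with
   delta^q = delta, at most q|M| elements because S/M is a field and sigma acts on it as the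
   q-Frobenius. *)

theory Submission
  imports Defs "HOL-Library.FuncSet" "HOL-Library.Product_Plus"
begin

lemma ring_aut_add: "ring_aut f \<Longrightarrow> f (x + y) = f x + f y"
  by (simp add: ring_aut_def)

lemma ring_aut_mult: "ring_aut f \<Longrightarrow> f (x * y) = f x * f y"
  by (simp add: ring_aut_def)

lemma ring_aut_one: "ring_aut f \<Longrightarrow> f 1 = 1"
  by (simp add: ring_aut_def)

lemma ring_aut_diff: "ring_aut f \<Longrightarrow> f ((x::'a::comm_ring_1) - y) = f x - f y"
  using ring_aut_add[of f "x - y" y] by (simp add: algebra_simps)

lemma ring_aut_unit: "ring_aut f \<Longrightarrow> x * y = 1 \<Longrightarrow> f x * f y = 1"
  by (metis ring_aut_mult ring_aut_one)

lemma ring_aut_funpow: "ring_aut f \<Longrightarrow> ring_aut (f ^^ k)"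
proof (induction k)
  case 0
  then show ?case by (simp add: ring_aut_def bij_id[unfolded id_def])
next
  case (Suc k)
  then have "bij (f ^^ Suc k)" by (auto simp: ring_aut_def bij_comp)
  with Suc show ?case by (simp add: ring_aut_def comp_def)
qed

lemma card_preimage_le_card_kernel:
  fixes g :: "'a::ab_group_add \<Rightarrow> 'b::ab_group_add"
  assumes "finite D" "finite W"
    and D_diff: "\<And>x y. x \<in> D \<Longrightarrow> y \<in> D \<Longrightarrow> x - y \<in> D"
    and g_diff: "\<And>x y. x \<in> D \<Longrightarrow> y \<in> D \<Longrightarrow> g (x - y) = g x - g y"
  shows "card {x\<in>D. g x \<in> W} \<le> card W * card {x\<in>D. g x = 0}"
proof -
  have fiber: "card {x\<in>D. g x = w} \<le> card {x\<in>D. g x = 0}" for w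
  proof (cases "\<exists>x0\<in>D. g x0 = w")
    case True
    then obtain x0 where x0: "x0 \<in> D" "g x0 = w" by blast
    have "inj_on (\<lambda>x. x - x0) {x\<in>D. g x = w}" by (rule inj_onI) simp
    moreover have "(\<lambda>x. x - x0) ` {x\<in>D. g x = w} \<subseteq> {x\<in>D. g x = 0}"
      using x0 D_diff g_diff by auto
    ultimately show ?thesis using \<open>finite D\<close> by (intro card_inj_on_le) auto
  next
    case False
    then have "{x\<in>D. g x = w} = {}" by auto
    then show ?thesis unfolding \<open>{x\<in>D. g x = w} = {}\<close> by simp
  qed
  have "{x\<in>D. g x \<in> W} = (\<Union>w\<in>W. {x\<in>D. g x = w})" by auto
  then have "card {x\<in>D. g x \<in> W} \<le> (\<Sum>w\<in>W. card {x\<in>D. g x = w})"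
    using card_UN_le[OF \<open>finite W\<close>] by simp
  also have "\<dots> \<le> card W * card {x\<in>D. g x = 0}"
    using sum_mono[of W _ "\<lambda>_. card {x\<in>D. g x = 0}"] fiber by simp
  finally show ?thesis .
qed

lemma frk_attained:
  fixes V :: "'s::{comm_ring_1, finite} set"
  shows "\<exists>A\<subseteq>V. R_indep R A \<and> card A = frk R V"
proof -
  let ?S = "{card A | A. A \<subseteq> V \<and> R_indep R A}"
  have "R_indep R {}" unfolding R_indep_def by simp
  moreover have "?S \<subseteq> {..card (UNIV :: 's set)}" by (auto intro: card_mono)
  then have "finite ?S" by (rule finite_subset) simp
  ultimately have "Max ?S \<in> ?S" by (intro Max_in) auto
  then show ?thesis unfolding frk_def by auto
qed

lemma monic_division_quotient:
  fixes g k r h :: "'a::comm_ring_1 poly"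
  assumes h: "lead_coeff h = 1" and g: "lead_coeff g = 1" and div: "h = g * k + r"
    and "degree r < degree g" "degree g < degree h"
  shows "lead_coeff k = 1 \<and> degree k \<ge> 1"
proof -
  have gk: "g * k = h - r" using div by simp
  have "degree r < degree h" using assms(4,5) by linarith
  then have coeff_h_r: "coeff (h - r) (degree h) = 1" using h coeff_eq_0[of r "degree h"] by simp
  have "degree (h - r) \<le> degree h" by (rule degree_diff_le) (use \<open>degree r < degree h\<close> in auto)
  moreover have "degree h \<le> degree (h - r)" using coeff_h_r by (intro le_degree) simp
  ultimately have "degree (h - r) = degree h" by simp
  then have gk_lead: "degree (g * k) = degree h" "lead_coeff (g * k) = 1"
    using gk coeff_h_r by simp_all
  then have "k \<noteq> 0" by auto
  have top: "coeff (g * k) (degree g + degree k) = lead_coeff k"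
    using coeff_mult_degree_sum[of g k] g by simp
  then have "degree g + degree k \<le> degree (g * k)" using \<open>k \<noteq> 0\<close> by (intro le_degree) simp
  then have "degree (g * k) = degree g + degree k" using degree_mult_le[of g k] by simp
  then show ?thesis using gk_lead top \<open>degree g < degree h\<close> by simp
qed

section \<open>Finite chain rings\<close>

locale chain_ring =
  fixes R :: "'s::{comm_ring_1, finite} set"
  assumes finite_chain_ring: "finite_chain_ring R"
begin

abbreviation "\<mm> \<equiv> max_ideal R"
abbreviation "\<MM> \<equiv> ext_ideal R"
abbreviation "q \<equiv> resfield_card R"

lemma subring: "subring_of R"
  using finite_chain_ring by (simp add: finite_chain_ring_def)

lemma zero_in_R: "0 \<in> R" and one_in_R: "1 \<in> R"
  using subring by (auto simp: subring_of_def)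

lemma add_in_R: "x \<in> R \<Longrightarrow> y \<in> R \<Longrightarrow> x + y \<in> R"
  and diff_in_R: "x \<in> R \<Longrightarrow> y \<in> R \<Longrightarrow> x - y \<in> R"
  and mult_in_R: "x \<in> R \<Longrightarrow> y \<in> R \<Longrightarrow> x * y \<in> R"
  using subring by (auto simp: subring_of_def)

lemma power_in_R: "x \<in> R \<Longrightarrow> x ^ n \<in> R"
  by (induction n) (auto simp: one_in_R mult_in_R)

lemma sum_in_R: "(\<And>i. i \<in> A \<Longrightarrow> f i \<in> R) \<Longrightarrow> (\<Sum>i\<in>A. f i) \<in> R"
  by (induction A rule: infinite_finite_induct) (auto simp: zero_in_R add_in_R)

lemma nontrivial: "(1::'s) \<noteq> 0"
  using finite_chain_ring by (simp add: finite_chain_ring_def)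

lemma max_ideal_subset: "\<mm> \<subseteq> R"
  by (auto simp: max_ideal_def)

lemma not_in_max_ideal_unit: "x \<in> R \<Longrightarrow> x \<notin> \<mm> \<Longrightarrow> \<exists>u\<in>R. x * u = 1"
  by (simp add: max_ideal_def)

lemma one_notin_max_ideal: "1 \<notin> \<mm>"
  using one_in_R by (auto simp: max_ideal_def)

lemma zero_in_max_ideal: "0 \<in> \<mm>"
  using zero_in_R nontrivial by (auto simp: max_ideal_def)

lemma max_ideal_mult: "x \<in> \<mm> \<Longrightarrow> r \<in> R \<Longrightarrow> x * r \<in> \<mm>"
  by (auto simp: max_ideal_def mult_in_R mult.assoc)

lemma max_ideal_uminus: "x \<in> \<mm> \<Longrightarrow> - x \<in> \<mm>"
  using max_ideal_mult[of x "- 1"] diff_in_R[OF zero_in_R one_in_R] by simp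

definition R_multiples :: "'s \<Rightarrow> 's set" where
  "R_multiples x = {x * r | r. r \<in> R}"

lemma R_multiples_self: "x \<in> R \<Longrightarrow> x \<in> R_multiples x"
  unfolding R_multiples_def using one_in_R by force

lemma ideal_R_multiples: "x \<in> R \<Longrightarrow> ideal_in R (R_multiples x)"
  unfolding ideal_in_def R_multiples_def
proof (intro conjI ballI)
  assume x: "x \<in> R"
  show "{x * r |r. r \<in> R} \<subseteq> R" using x mult_in_R by auto
  show "0 \<in> {x * r |r. r \<in> R}" using zero_in_R by (auto intro!: exI[of _ 0])
  fix u v assume "u \<in> {x * r |r. r \<in> R}" "v \<in> {x * r |r. r \<in> R}"
  then obtain r s where "r \<in> R" "s \<in> R" "u = x * r" "v = x * s" by auto
  then show "u + v \<in> {x * r |r. r \<in> R}"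
    using add_in_R by (auto simp: distrib_left intro!: exI[of _ "r + s"])
next
  fix r u assume "r \<in> R" "u \<in> {x * r |r. r \<in> R}"
  then obtain s where "s \<in> R" "u = x * s" by auto
  then show "r * u \<in> {x * r |r. r \<in> R}"
    using mult_in_R \<open>r \<in> R\<close> by (auto simp: mult.left_commute intro!: exI[of _ "r * s"])
qed

lemma R_multiples_chain: "x \<in> R \<Longrightarrow> y \<in> R \<Longrightarrow> R_multiples x \<subseteq> R_multiples y \<or> R_multiples y \<subseteq> R_multiples x"
  using finite_chain_ring ideal_R_multiples unfolding finite_chain_ring_def by blast

text \<open>The non-units of \<open>R\<close> are closed under addition because its principal ideals form a chain.\<close>

lemma max_ideal_add: assumes "x \<in> \<mm>" "y \<in> \<mm>" shows "x + y \<in> \<mm>"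
proof -
  have *: "x + y \<in> \<mm>" if x: "x \<in> \<mm>" and y: "y \<in> \<mm>" and sub: "R_multiples x \<subseteq> R_multiples y" for x y
  proof -
    obtain r where r: "r \<in> R" "x = y * r"
      using sub R_multiples_self x max_ideal_subset unfolding R_multiples_def by blast
    then have "x + y = y * (r + 1)" by (simp add: algebra_simps)
    then show ?thesis using max_ideal_mult[OF y] add_in_R[OF r(1) one_in_R] by simp
  qed
  show ?thesis
    using R_multiples_chain[of x y] assms max_ideal_subset *[of x y] *[of y x] by (auto simp: add.commute)
qed

lemma max_ideal_diff: "x \<in> \<mm> \<Longrightarrow> y \<in> \<mm> \<Longrightarrow> x - y \<in> \<mm>"
  using max_ideal_add[of x "- y"] max_ideal_uminus by simp

lemma one_minus_max_ideal_unit: assumes "x \<in> \<mm>" shows "\<exists>u\<in>R. (1 - x) * u = 1"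
proof -
  have "1 - x \<notin> \<mm>" using max_ideal_add[OF _ assms, of "1 - x"] one_notin_max_ideal by auto
  then show ?thesis using not_in_max_ideal_unit diff_in_R one_in_R assms max_ideal_subset by blast
qed

lemma max_ideal_principal: "\<exists>\<pi>\<in>\<mm>. \<forall>x\<in>\<mm>. \<exists>u\<in>R. x = \<pi> * u"
proof -
  obtain p where p: "p \<in> \<mm>" "card (R_multiples p) = Max (card ` R_multiples ` \<mm>)"
    using Max_in[of "card ` R_multiples ` \<mm>"] zero_in_max_ideal by fastforce
  have "x \<in> R_multiples p" if x: "x \<in> \<mm>" for x
  proof -
    have le: "card (R_multiples x) \<le> card (R_multiples p)" using p x by simp
    have xR: "x \<in> R" "p \<in> R" using x p max_ideal_subset by auto
    then consider "R_multiples x \<subseteq> R_multiples p" | "R_multiples p \<subseteq> R_multiples x"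
      using R_multiples_chain by blast
    then show ?thesis
    proof cases
      case 2
      then have "R_multiples p = R_multiples x" using le by (meson card_mono card_subset_eq finite le_antisym)
      then show ?thesis using R_multiples_self xR by auto
    qed (use R_multiples_self xR in auto)
  qed
  then show ?thesis using p(1) unfolding R_multiples_def by blast
qed

definition uniformizer :: 's where
  "uniformizer = (SOME \<pi>. \<pi> \<in> \<mm> \<and> (\<forall>x\<in>\<mm>. \<exists>u\<in>R. x = \<pi> * u))"

lemma uniformizer_spec: "uniformizer \<in> \<mm> \<and> (\<forall>x\<in>\<mm>. \<exists>u\<in>R. x = uniformizer * u)"
  unfolding uniformizer_def by (rule someI_ex) (use max_ideal_principal in blast)

lemma uniformizer_in_max_ideal: "uniformizer \<in> \<mm>"
  and max_ideal_uniformizer_multiple: "x \<in> \<mm> \<Longrightarrow> \<exists>u\<in>R. x = uniformizer * u"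
  using uniformizer_spec by blast+

lemma uniformizer_in_R: "uniformizer \<in> R"
  using uniformizer_in_max_ideal max_ideal_subset by auto

text \<open>The ideals \<open>\<pi>\<^sup>k R\<close> decrease, so they stabilise: \<open>\<pi>\<^sup>k = \<pi>\<^sup>k\<^sup>+\<^sup>1 u\<close>, and \<open>1 - \<pi> u\<close> is a unit.\<close>

lemma uniformizer_nilpotent: "\<exists>e. uniformizer ^ e = 0"
proof -
  define I where "I k = R_multiples (uniformizer ^ k)" for k
  have dec: "I (Suc k) \<subseteq> I k" for k
    unfolding I_def R_multiples_def
    by (auto, metis mult_in_R uniformizer_in_R mult.assoc mult.commute power_Suc)
  have "\<exists>k. I (Suc k) = I k"
  proof (rule ccontr)
    assume "\<not> ?thesis"
    then have lt: "card (I (Suc k)) < card (I k)" for k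
      using dec by (meson finite psubset_card_mono psubsetI)
    have "card (I k) + k \<le> card (I 0)" for k
    proof (induction k)
      case (Suc k)
      with lt[of k] show ?case by simp
    qed simp
    from this[of "Suc (card (I 0))"] show False by simp
  qed
  then obtain k where k: "I (Suc k) = I k" by blast
  have "uniformizer ^ k \<in> I k"
    unfolding I_def using R_multiples_self power_in_R uniformizer_in_R by blast
  then obtain u where u: "u \<in> R" "uniformizer ^ k = uniformizer ^ Suc k * u"
    using k unfolding I_def R_multiples_def by auto
  have "uniformizer * u \<in> \<mm>" using max_ideal_mult uniformizer_in_max_ideal u by auto
  then obtain v where v: "(1 - uniformizer * u) * v = 1" using one_minus_max_ideal_unit by blast
  have "uniformizer ^ k * (1 - uniformizer * u) = 0" using u by (simp add: algebra_simps)
  then have "uniformizer ^ k = 0" using v by (metis mult.assoc mult_1_right mult_zero_left)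
  then show ?thesis by blast
qed

lemma uniformizer_annihilator: "\<exists>t\<in>R. t \<noteq> 0 \<and> t * uniformizer = 0"
proof -
  define e where "e = (LEAST e. uniformizer ^ e = 0)"
  have e0: "uniformizer ^ e = 0" unfolding e_def by (rule LeastI_ex) (rule uniformizer_nilpotent)
  then obtain e' where e': "e = Suc e'" using nontrivial by (cases e) auto
  have "uniformizer ^ e' \<noteq> 0"
    using e' not_less_Least[of e' "\<lambda>e. uniformizer ^ e = 0"] unfolding e_def by simp
  moreover have "uniformizer ^ e' * uniformizer = 0" using e0 e' by (simp add: mult.commute)
  ultimately show ?thesis using power_in_R uniformizer_in_R by blast
qed

lemma resfield_card_ge_2: "q \<ge> 2"
proof -
  have disj: "\<mm> \<inter> (\<lambda>x. 1 + x) ` \<mm> = {}"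
    using max_ideal_diff one_notin_max_ideal by fastforce
  have "\<mm> \<union> (\<lambda>x. 1 + x) ` \<mm> \<subseteq> R" using max_ideal_subset one_in_R add_in_R by auto
  then have "card (\<mm> \<union> (\<lambda>x. 1 + x) ` \<mm>) \<le> card R" by (simp add: card_mono)
  then have "card \<mm> + card \<mm> \<le> card R" using disj by (simp add: card_Un_disjoint card_image)
  moreover have "card \<mm> > 0" using zero_in_max_ideal by (auto simp: card_gt_0_iff)
  ultimately show ?thesis
    unfolding resfield_card_def using div_le_mono[of "2 * card \<mm>" "card R" "card \<mm>"] by simp
qed

text \<open>A maximal set of pairwise incongruent elements meets every coset of \<open>\<mm>\<close>.\<close>

lemma residue_representatives:
  "\<exists>B\<subseteq>R. q \<le> card B \<and> (\<forall>x\<in>B. \<forall>y\<in>B. x - y \<in> \<mm> \<longrightarrow> x = y)"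
proof -
  define P where "P B \<longleftrightarrow> B \<subseteq> R \<and> (\<forall>x\<in>B. \<forall>y\<in>B. x - y \<in> \<mm> \<longrightarrow> x = y)" for B
  have "P {}" unfolding P_def by auto
  then obtain B where B: "P B" "card B = Max (card ` Collect P)"
    using Max_in[of "card ` Collect P"] by fastforce
  have cover: "\<exists>r\<in>B. x - r \<in> \<mm>" if x: "x \<in> R" for x
  proof (rule ccontr)
    assume none: "\<not> ?thesis"
    then have "x \<notin> B" using zero_in_max_ideal by force
    moreover have "P (insert x B)"
      unfolding P_def
    proof (intro conjI ballI impI)
      show "insert x B \<subseteq> R" using B(1) x unfolding P_def by auto
      fix y z assume "y \<in> insert x B" "z \<in> insert x B" "y - z \<in> \<mm>"
      moreover have "x - y \<notin> \<mm>" "y - x \<notin> \<mm>" if "y \<in> B" for y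
        using none that max_ideal_uminus[of "y - x"] by auto
      ultimately show "y = z" using B(1) unfolding P_def by auto
    qed
    then have "card (insert x B) \<le> Max (card ` Collect P)" by (intro Max_ge) auto
    then have "card (insert x B) \<le> card B" using B(2) by simp
    ultimately show False by simp
  qed
  have "R \<subseteq> (\<Union>r\<in>B. (\<lambda>y. r + y) ` \<mm>)"
  proof
    fix x assume "x \<in> R"
    then obtain r where "r \<in> B" "x - r \<in> \<mm>" using cover by blast
    then show "x \<in> (\<Union>r\<in>B. (\<lambda>y. r + y) ` \<mm>)" by (auto intro!: bexI[of _ r] image_eqI[of _ _ "x - r"])
  qed
  then have "card R \<le> card (\<Union>r\<in>B. (\<lambda>y. r + y) ` \<mm>)" by (simp add: card_mono)
  also have "\<dots> \<le> (\<Sum>r\<in>B. card ((\<lambda>y. r + y) ` \<mm>))" by (rule card_UN_le) simp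
  also have "\<dots> = card B * card \<mm>" by (simp add: card_image)
  finally have "card R div card \<mm> \<le> card B * card \<mm> div card \<mm>" by (rule div_le_mono)
  then have "q \<le> card B" unfolding resfield_card_def using zero_in_max_ideal by (auto split: if_splits)
  then show ?thesis using B(1) unfolding P_def by blast
qed

lemma ext_ideal_eq: "\<MM> = range (\<lambda>s. uniformizer * s)"
proof
  show "\<MM> \<subseteq> range (\<lambda>s. uniformizer * s)"
  proof
    fix x assume "x \<in> \<MM>"
    then obtain n s r where x: "x = (\<Sum>i<(n::nat). s i * r i)" "\<forall>i<n. r i \<in> \<mm>"
      unfolding ext_ideal_def by blast
    have "\<forall>i. \<exists>u. i < n \<longrightarrow> r i = uniformizer * u"
      using x(2) max_ideal_uniformizer_multiple by blast
    then obtain u where u: "\<And>i. i < n \<Longrightarrow> r i = uniformizer * u i"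
      by metis
    have "x = uniformizer * (\<Sum>i<n. s i * u i)"
      unfolding x(1) sum_distrib_left by (rule sum.cong) (simp_all add: u mult.left_commute)
    then show "x \<in> range (\<lambda>s. uniformizer * s)" by blast
  qed
next
  have "uniformizer * s = (\<Sum>i<(1::nat). s * uniformizer)" for s
    by (simp add: mult.commute)
  then show "range (\<lambda>s. uniformizer * s) \<subseteq> \<MM>"
    unfolding ext_ideal_def using uniformizer_in_max_ideal by fastforce
qed

lemma ext_ideal_iff: "x \<in> \<MM> \<longleftrightarrow> (\<exists>s. x = uniformizer * s)"
  unfolding ext_ideal_eq by auto

lemma zero_in_ext_ideal: "0 \<in> \<MM>"
  unfolding ext_ideal_iff by (auto intro: exI[of _ 0])

lemma ext_ideal_add: "x \<in> \<MM> \<Longrightarrow> y \<in> \<MM> \<Longrightarrow> x + y \<in> \<MM>"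
  unfolding ext_ideal_iff by (auto simp: distrib_left[symmetric])

lemma ext_ideal_mult_left: "x \<in> \<MM> \<Longrightarrow> y * x \<in> \<MM>"
  unfolding ext_ideal_iff by (auto intro: mult.left_commute)

lemma ext_ideal_mult_right: "x \<in> \<MM> \<Longrightarrow> x * y \<in> \<MM>"
  using ext_ideal_mult_left[of x y] by (simp add: mult.commute)

lemma uminus_ext_ideal_iff: "- x \<in> \<MM> \<longleftrightarrow> x \<in> \<MM>"
  using ext_ideal_mult_left[of "- x" "- 1"] ext_ideal_mult_left[of x "- 1"] by auto

lemma ext_ideal_diff: "x \<in> \<MM> \<Longrightarrow> y \<in> \<MM> \<Longrightarrow> x - y \<in> \<MM>"
  using ext_ideal_add[of x "- y"] uminus_ext_ideal_iff by simp

lemma add_ext_ideal_iff: assumes "y \<in> \<MM>" shows "x + y \<in> \<MM> \<longleftrightarrow> x \<in> \<MM>"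
proof
  assume "x + y \<in> \<MM>"
  then show "x \<in> \<MM>" using ext_ideal_diff[OF _ assms, of "x + y"] by simp
qed (rule ext_ideal_add[OF _ assms])

lemma ext_ideal_sum: "(\<And>i. i \<in> A \<Longrightarrow> f i \<in> \<MM>) \<Longrightarrow> (\<Sum>i\<in>A. f i) \<in> \<MM>"
  by (induction A rule: infinite_finite_induct) (auto simp: zero_in_ext_ideal ext_ideal_add)

lemma max_ideal_subset_ext_ideal: "\<mm> \<subseteq> \<MM>"
  using max_ideal_uniformizer_multiple ext_ideal_iff by blast

lemma ext_ideal_nilpotent: "x \<in> \<MM> \<Longrightarrow> \<exists>k. x ^ k = 0"
  using uniformizer_nilpotent unfolding ext_ideal_iff by (metis mult_zero_left power_mult_distrib)

lemma one_plus_ext_ideal_unit: assumes "x \<in> \<MM>" shows "(1 + x) dvd 1"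
proof -
  obtain k where "x ^ k = 0" using ext_ideal_nilpotent[OF assms] by blast
  then have "(- x) ^ k = 0" by (metis mult_zero_right power_minus)
  moreover have "1 - (- x) ^ k = (1 - (- x)) * (\<Sum>i<k. (- x) ^ i)" by (rule one_diff_power_eq)
  ultimately have "1 = (1 + x) * (\<Sum>i<k. (- x) ^ i)" by simp
  then show ?thesis by (rule dvdI)
qed

lemma one_notin_ext_ideal: "1 \<notin> \<MM>"
proof
  assume "1 \<in> \<MM>"
  then obtain k where "(1::'s) ^ k = 0" using ext_ideal_nilpotent by blast
  then show False using nontrivial by simp
qed

lemma unit_notin_ext_ideal: assumes "u dvd 1" shows "u \<notin> \<MM>"
proof
  assume "u \<in> \<MM>"
  moreover obtain v where "1 = u * v" using assms by (rule dvdE)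
  ultimately show False using ext_ideal_mult_right[of u v] one_notin_ext_ideal by simp
qed

lemma unit_if_inverse_mod_ext_ideal: "x * y - 1 \<in> \<MM> \<Longrightarrow> x dvd 1"
  using one_plus_ext_ideal_unit[of "x * y - 1"] by (simp add: dvd_mult_left)

lemma ext_ideal_unit_cancel: "u * v = 1 \<Longrightarrow> u * x \<in> \<MM> \<Longrightarrow> x \<in> \<MM>"
  using ext_ideal_mult_left[of "u * x" v] by (metis mult.left_commute mult_1_right)

lemma ext_ideal_annihilator: "\<exists>t\<in>R. t \<noteq> 0 \<and> (\<forall>x\<in>\<MM>. t * x = 0)"
proof -
  obtain t where t: "t \<in> R" "t \<noteq> 0" "t * uniformizer = 0" using uniformizer_annihilator by blast
  have "t * x = 0" if "x \<in> \<MM>" for x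
  proof -
    obtain s where "x = uniformizer * s" using \<open>x \<in> \<MM>\<close> ext_ideal_iff by blast
    then show ?thesis using t(3) by (simp add: mult.assoc[symmetric])
  qed
  then show ?thesis using t(1,2) by blast
qed

lemma card_ext_ideal_pos: "card \<MM> > 0"
  using zero_in_ext_ideal card_gt_0_iff[of \<MM>] finite[of \<MM>] by blast

lemma ring_aut_fixing_ext_ideal:
  assumes "ring_aut f" "\<forall>r\<in>R. f r = r" "x \<in> \<MM>"
  shows "f x \<in> \<MM>"
  using assms uniformizer_in_R ring_aut_mult[OF assms(1)] unfolding ext_ideal_iff by auto

text \<open>Pair \<open>\<gamma>\<close> with \<open>\<mu> \<in> \<MM>\<close> and count the preimages of \<open>W\<close> and of \<open>0\<close> under \<open>(\<gamma>, \<mu>) \<mapsto> L \<gamma> + \<mu>\<close>.\<close>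

lemma card_preimage_mult_card_ext_ideal_le:
  fixes L :: "'s \<Rightarrow> 's"
  assumes L_add: "\<And>x y. L (x + y) = L x + L y"
    and W: "\<And>w \<mu>. w \<in> W \<Longrightarrow> \<mu> \<in> \<MM> \<Longrightarrow> w + \<mu> \<in> W"
  shows "card {\<gamma>. L \<gamma> \<in> W} * card \<MM> \<le> card W * card {\<gamma>. L \<gamma> \<in> \<MM>}"
proof -
  have L_diff: "L (x - y) = L x - L y" for x y
    using L_add[of "x - y" y] by (simp add: algebra_simps)
  have W_shift: "w + \<mu> \<in> W \<longleftrightarrow> w \<in> W" if "\<mu> \<in> \<MM>" for w \<mu>
    using W[of w \<mu>] W[of "w + \<mu>" "- \<mu>"] that uminus_ext_ideal_iff by auto
  define D where "D = (UNIV :: 's set) \<times> \<MM>"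
  define G where "G z = L (fst z) + snd z" for z
  have "card {z\<in>D. G z \<in> W} \<le> card W * card {z\<in>D. G z = 0}"
    by (rule card_preimage_le_card_kernel)
      (auto simp: D_def G_def L_diff ext_ideal_diff)
  moreover have "{z\<in>D. G z \<in> W} = {\<gamma>. L \<gamma> \<in> W} \<times> \<MM>"
    unfolding D_def G_def using W_shift by auto
  moreover have "{z\<in>D. G z = 0} = (\<lambda>x. (x, - L x)) ` {\<gamma>. L \<gamma> \<in> \<MM>}"
    unfolding D_def G_def by (auto simp: uminus_ext_ideal_iff add_eq_0_iff image_iff)
  moreover have "card ((\<lambda>x. (x, - L x)) ` {\<gamma>. L \<gamma> \<in> \<MM>}) = card {\<gamma>. L \<gamma> \<in> \<MM>}"
    by (rule card_image) (rule inj_onI, simp)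
  ultimately show ?thesis by (simp add: card_cartesian_product)
qed

text \<open>Multiplying by a nonzero annihilator of \<open>\<MM>\<close> turns a relation modulo \<open>\<MM>\<close> into a relation in \<open>S\<close>.\<close>

lemma R_indep_coeffs_in_max_ideal:
  assumes A: "R_indep R A" and c: "\<forall>v\<in>A. c v \<in> R" and sum: "(\<Sum>v\<in>A. c v * v) \<in> \<MM>"
  shows "\<forall>v\<in>A. c v \<in> \<mm>"
proof
  fix v assume v: "v \<in> A"
  obtain t where t: "t \<in> R" "t \<noteq> 0" "\<forall>x\<in>\<MM>. t * x = 0" using ext_ideal_annihilator by blast
  have "(\<Sum>w\<in>A. (t * c w) * w) = t * (\<Sum>w\<in>A. c w * w)"
    by (simp add: sum_distrib_left mult.assoc)
  also have "\<dots> = 0" using t(3) sum by blast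
  finally have "(\<Sum>w\<in>A. (t * c w) * w) = 0" .
  moreover have "\<forall>w\<in>A. t * c w \<in> R" using c t(1) mult_in_R by blast
  ultimately have "\<forall>w\<in>A. t * c w = 0"
    using A unfolding R_indep_def by (elim conjE allE[of _ "\<lambda>w. t * c w"]) simp
  then have tc: "t * c v = 0" using v by blast
  show "c v \<in> \<mm>"
  proof (rule ccontr)
    assume "c v \<notin> \<mm>"
    then obtain u where "c v * u = 1" using not_in_max_ideal_unit c v by blast
    then have "t = t * c v * u" by (simp add: mult.assoc)
    then show False using tc t(2) by simp
  qed
qed

lemma R_indep_combinations_inj:
  assumes A: "R_indep R A" and B: "B \<subseteq> R" "\<forall>x\<in>B. \<forall>y\<in>B. x - y \<in> \<mm> \<longrightarrow> x = y"
  shows "inj_on (\<lambda>(c, \<mu>). (\<Sum>v\<in>A. c v * v) + \<mu>) (PiE A (\<lambda>_. B) \<times> \<MM>)"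
proof (rule inj_onI, clarify)
  fix c1 \<mu>1 c2 \<mu>2
  assume c: "c1 \<in> PiE A (\<lambda>_. B)" "c2 \<in> PiE A (\<lambda>_. B)" and \<mu>: "\<mu>1 \<in> \<MM>" "\<mu>2 \<in> \<MM>"
    and eq: "(\<Sum>v\<in>A. c1 v * v) + \<mu>1 = (\<Sum>v\<in>A. c2 v * v) + \<mu>2"
  then have "(\<Sum>v\<in>A. (c1 v - c2 v) * v) = \<mu>2 - \<mu>1"
    by (simp add: sum_subtractf algebra_simps)
  then have "(\<Sum>v\<in>A. (c1 v - c2 v) * v) \<in> \<MM>" using ext_ideal_diff[OF \<mu>(2,1)] by simp
  moreover have "\<forall>v\<in>A. c1 v - c2 v \<in> R" using c B(1) by (auto simp: PiE_iff intro!: diff_in_R)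
  ultimately have "\<forall>v\<in>A. c1 v - c2 v \<in> \<mm>"
    using R_indep_coeffs_in_max_ideal[OF A, of "\<lambda>v. c1 v - c2 v"] by blast
  with B(2) c have "c1 = c2" by (intro PiE_ext) (auto simp: PiE_iff)
  then show "c1 = c2 \<and> \<mu>1 = \<mu>2" using eq by simp
qed

lemma card_submodule_ge:
  assumes "\<MM> \<subseteq> V" and V_add: "\<And>x y. x \<in> V \<Longrightarrow> y \<in> V \<Longrightarrow> x + y \<in> V"
    and V_smult: "\<And>r x. r \<in> R \<Longrightarrow> x \<in> V \<Longrightarrow> r * x \<in> V"
    and "A \<subseteq> V" and A: "R_indep R A"
  shows "card \<MM> * q ^ card A \<le> card V"
proof -
  obtain B where B: "B \<subseteq> R" "q \<le> card B" "\<forall>x\<in>B. \<forall>y\<in>B. x - y \<in> \<mm> \<longrightarrow> x = y"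
    using residue_representatives by blast
  have "finite A" using A unfolding R_indep_def by blast
  have V_comb: "(\<Sum>v\<in>A'. c v * v) \<in> V" if "A' \<subseteq> A" "\<forall>v\<in>A'. c v \<in> R" for A' c
    using finite_subset[OF that(1) \<open>finite A\<close>] that
  proof (induction A' rule: finite_induct)
    case empty
    then show ?case using \<open>\<MM> \<subseteq> V\<close> zero_in_ext_ideal by auto
  next
    case (insert v F)
    then show ?case using V_add V_smult \<open>A \<subseteq> V\<close> by auto
  qed
  have "(\<lambda>(c, \<mu>). (\<Sum>v\<in>A. c v * v) + \<mu>) ` (PiE A (\<lambda>_. B) \<times> \<MM>) \<subseteq> V"
  proof clarify
    fix c \<mu> assume "c \<in> PiE A (\<lambda>_. B)" "\<mu> \<in> \<MM>"
    moreover from this(1) have "\<forall>v\<in>A. c v \<in> R" using B(1) by (auto simp: PiE_iff)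
    ultimately show "(\<Sum>v\<in>A. c v * v) + \<mu> \<in> V" using V_comb[of A c] V_add \<open>\<MM> \<subseteq> V\<close> by auto
  qed
  then have "card (PiE A (\<lambda>_. B) \<times> \<MM>) \<le> card V"
    using card_inj_on_le[OF R_indep_combinations_inj[OF A B(1,3)]] by simp
  then have "card B ^ card A * card \<MM> \<le> card V"
    by (simp add: card_cartesian_product card_PiE \<open>finite A\<close>)
  moreover have "q ^ card A \<le> card B ^ card A" using B(2) by (rule power_mono) simp
  ultimately show ?thesis by (metis dual_order.trans mult.commute mult_le_mono1)
qed

lemma poly_over_coeff: "poly_over R p \<Longrightarrow> coeff p i \<in> R"
  by (simp add: poly_over_def)

lemma poly_over_add: "poly_over R p \<Longrightarrow> poly_over R p' \<Longrightarrow> poly_over R (p + p')"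
  by (simp add: poly_over_def add_in_R)

lemma poly_over_diff: "poly_over R p \<Longrightarrow> poly_over R p' \<Longrightarrow> poly_over R (p - p')"
  by (simp add: poly_over_def diff_in_R)

lemma poly_over_mult: "poly_over R p \<Longrightarrow> poly_over R p' \<Longrightarrow> poly_over R (p * p')"
  unfolding poly_over_def coeff_mult by (blast intro: sum_in_R mult_in_R)

lemma poly_over_monom: "c \<in> R \<Longrightarrow> poly_over R (monom c n)"
  by (simp add: poly_over_def zero_in_R)

lemma poly_over_0: "poly_over R 0"
  by (simp add: poly_over_def zero_in_R)

lemma poly_over_cancel_lead:
  assumes g: "poly_over R g" "lead_coeff g = 1" and f: "poly_over R f" "degree g \<le> degree f"
  obtains c e where "c \<in> R" "poly_over R (f - monom c e * g)"
    "f - monom c e * g = 0 \<or> degree (f - monom c e * g) < degree f"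
proof -
  define c where "c = lead_coeff f"
  define e where "e = degree f - degree g"
  define f' where "f' = f - monom c e * g"
  have c: "c \<in> R" unfolding c_def using f(1) poly_over_coeff by blast
  have "degree (monom c e * g) \<le> degree f"
    using degree_mult_le[of "monom c e" g] degree_monom_le[of c e] f(2) unfolding e_def by linarith
  then have deg: "degree f' \<le> degree f" unfolding f'_def by (intro degree_diff_le) auto
  have "coeff (monom c e * g) (degree f) = c"
    using f(2) g(2) by (simp add: coeff_monom_mult e_def)
  then have top: "coeff f' (degree f) = 0" unfolding f'_def c_def by simp
  have "f' = 0 \<or> degree f' < degree f"
  proof (cases "f' = 0")
    case False
    then have "coeff f' (degree f') \<noteq> 0" by simp
    with top have "degree f' \<noteq> degree f" by metis
    with deg show ?thesis by simp
  qed simp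
  moreover have "poly_over R f'"
    unfolding f'_def by (intro poly_over_diff f(1) poly_over_mult poly_over_monom c g(1))
  ultimately show ?thesis using that c unfolding f'_def by blast
qed

lemma poly_over_monic_division:
  assumes g: "poly_over R g" "lead_coeff g = 1"
  shows "poly_over R f \<Longrightarrow> \<exists>k r. poly_over R k \<and> poly_over R r \<and> f = g * k + r \<and>
            (r = 0 \<or> degree r < degree g)"
proof (induction "degree f" arbitrary: f rule: less_induct)
  case less
  show ?case
  proof (cases "f = 0 \<or> degree f < degree g")
    case True
    then show ?thesis using less.prems poly_over_0 by (intro exI[of _ 0] exI[of _ f]) auto
  next
    case False
    then have "degree g \<le> degree f" by simp
    then obtain c e where c: "c \<in> R" and f': "poly_over R (f - monom c e * g)"
      and smaller: "f - monom c e * g = 0 \<or> degree (f - monom c e * g) < degree f"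
      using poly_over_cancel_lead[OF g less.prems] by blast
    obtain k r where "poly_over R k" "poly_over R r" "f - monom c e * g = g * k + r"
      and "r = 0 \<or> degree r < degree g"
    proof (cases "f - monom c e * g = 0")
      case True
      then show ?thesis using that[of 0 0] poly_over_0 by simp
    next
      case False
      then show ?thesis using that less.hyps[OF _ f'] smaller by blast
    qed
    moreover have "poly_over R (k + monom c e)" using \<open>poly_over R k\<close> poly_over_add poly_over_monom[OF c] by blast
    moreover have "f = g * (k + monom c e) + r" using \<open>f - monom c e * g = g * k + r\<close> by (simp add: algebra_simps)
    ultimately show ?thesis by blast
  qed
qed

lemma poly_in_ext_ideal: "(\<And>i. coeff p i \<in> \<mm>) \<Longrightarrow> poly p y \<in> \<MM>"
  unfolding poly_altdef
  by (intro ext_ideal_sum ext_ideal_mult_right) (use max_ideal_subset_ext_ideal in blast)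

text \<open>Cut \<open>p\<close> off above its last coefficient outside \<open>\<mm>\<close> and scale that coefficient to \<open>1\<close>.\<close>

lemma monic_associate_mod_max_ideal:
  assumes p: "poly_over R p" and "\<exists>i. coeff p i \<notin> \<mm>"
  obtains u p' where "u \<in> R" "poly_over R p'" "lead_coeff p' = 1" "degree p' \<le> degree p"
    "\<And>y. poly p' y - u * poly p y \<in> \<MM>"
proof -
  define K where "K = {i. coeff p i \<notin> \<mm>}"
  have "K \<subseteq> {..degree p}" unfolding K_def using zero_in_max_ideal by (auto intro: le_degree)
  then have "finite K" by (rule finite_subset) simp
  moreover have "K \<noteq> {}" using assms(2) unfolding K_def by auto
  ultimately have kK: "Max K \<in> K" by (rule Max_in)
  have k_max: "coeff p i \<in> \<mm>" if "i > Max K" for i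
    using Max_ge[OF \<open>finite K\<close>, of i] that unfolding K_def by auto
  define k where "k = Max K"
  obtain u where u: "u \<in> R" "coeff p k * u = 1"
    using kK not_in_max_ideal_unit poly_over_coeff[OF p] unfolding K_def k_def by blast
  define p' where "p' = smult u (poly_cutoff (Suc k) p)"
  have coeff_p': "coeff p' j = (if j \<le> k then u * coeff p j else 0)" for j
    unfolding p'_def by (simp add: coeff_poly_cutoff)
  have "degree p' = k"
    using u by (intro antisym degree_le le_degree) (auto simp: coeff_p' mult.commute)
  moreover have "k \<le> degree p" using kK \<open>K \<subseteq> {..degree p}\<close> unfolding k_def by auto
  moreover have "lead_coeff p' = 1" using \<open>degree p' = k\<close> u by (simp add: coeff_p' mult.commute)
  moreover have "poly_over R p'"
    using poly_over_coeff[OF p] u zero_in_R mult_in_R unfolding poly_over_def coeff_p' by auto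
  moreover have "poly p' y - u * poly p y \<in> \<MM>" for y
  proof -
    have "poly p' y - u * poly p y = - u * poly (p - poly_cutoff (Suc k) p) y"
      unfolding p'_def by (simp add: algebra_simps)
    moreover have "coeff (p - poly_cutoff (Suc k) p) i \<in> \<mm>" for i
      using k_max[of i] zero_in_max_ideal unfolding k_def by (auto simp: coeff_poly_cutoff)
    ultimately show ?thesis using poly_in_ext_ideal ext_ideal_mult_left by metis
  qed
  ultimately show ?thesis using that u(1) by blast
qed

end

section \<open>The local ring S\<close>

locale galois_ring = chain_ring R for R :: "'s::{comm_ring_1, finite} set" +
  fixes h :: "'s poly"
  assumes h_over_R: "poly_over R h" and h_monic: "lead_coeff h = 1"
    and h_irreducible: "irred_mod_max R h" and quotient_by_h: "is_quotient_by R h"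
begin

lemma quotient_root:
  obtains \<theta> where "poly h \<theta> = 0"
    and "\<And>x. \<exists>p. poly_over R p \<and> degree p < degree h \<and> poly p \<theta> = x"
proof -
  obtain \<theta> where "poly h \<theta> = 0" and coords: "\<And>s. \<exists>!r. (\<forall>i. r i \<in> R) \<and>
      (\<forall>i\<ge>degree h. r i = 0) \<and> s = (\<Sum>i<degree h. r i * \<theta> ^ i)"
    using quotient_by_h unfolding is_quotient_by_def by blast
  have "\<exists>p. poly_over R p \<and> degree p < degree h \<and> poly p \<theta> = x" for x
  proof -
    obtain r where r: "\<forall>i. r i \<in> R" and x: "x = (\<Sum>i<degree h. r i * \<theta> ^ i)"
      using coords[of x] by blast
    define p where "p = (\<Sum>i<degree h. monom (r i) i)"
    have coeff_p: "coeff p j = (if j < degree h then r j else 0)" for j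
      unfolding p_def coeff_sum by (simp add: sum.delta)
    have "poly_over R p" unfolding poly_over_def coeff_p using r zero_in_R by auto
    have "degree p \<le> degree h - 1" by (rule degree_le) (auto simp: coeff_p)
    moreover have "degree h \<ge> 1" using h_irreducible unfolding irred_mod_max_def by blast
    ultimately have "degree p < degree h" by linarith
    moreover have "poly p \<theta> = x" unfolding p_def poly_sum poly_monom x ..
    ultimately show ?thesis using \<open>poly_over R p\<close> by blast
  qed
  then show ?thesis using that \<open>poly h \<theta> = 0\<close> by blast
qed

context
  fixes J :: "'s set"
  assumes J_add: "\<And>y z. y \<in> J \<Longrightarrow> z \<in> J \<Longrightarrow> y + z \<in> J"
    and J_mult: "\<And>y s. y \<in> J \<Longrightarrow> s * y \<in> J"
    and ext_ideal_subset_J: "\<MM> \<subseteq> J"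
begin

lemma monic_in_ideal_below:
  assumes "poly_over R p" "poly p \<theta> \<in> J" "\<exists>i. coeff p i \<notin> \<mm>"
  obtains p' where "poly_over R p'" "lead_coeff p' = 1" "degree p' \<le> degree p" "poly p' \<theta> \<in> J"
proof -
  obtain u p' where "poly_over R p'" "lead_coeff p' = 1" "degree p' \<le> degree p"
    and assoc: "poly p' \<theta> - u * poly p \<theta> \<in> \<MM>"
    using monic_associate_mod_max_ideal[OF assms(1,3)] by blast
  moreover have "(poly p' \<theta> - u * poly p \<theta>) + u * poly p \<theta> \<in> J"
    using J_add J_mult assms(2) ext_ideal_subset_J assoc by blast
  ultimately show ?thesis using that by simp
qed

text \<open>Dividing \<open>h\<close> by \<open>g\<close>, the remainder also lies in \<open>J\<close> at \<open>\<theta>\<close>; if it vanished modulo \<open>\<mm>\<close>, then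
  \<open>g\<close> would be a proper factor of \<open>h\<close> modulo \<open>\<mm>\<close>.\<close>

lemma monic_in_ideal_descent:
  assumes "1 \<notin> J" "poly h \<theta> = 0"
    and g: "poly_over R g" "lead_coeff g = 1" "poly g \<theta> \<in> J" "degree g < degree h"
  obtains g' where "poly_over R g'" "lead_coeff g' = 1" "degree g' < degree g" "poly g' \<theta> \<in> J"
proof -
  have "degree g \<noteq> 0"
  proof
    assume "degree g = 0"
    then have "poly g \<theta> = 1" using g(2) by (simp add: poly_altdef)
    then show False using g(3) \<open>1 \<notin> J\<close> by simp
  qed
  obtain k rem where k: "poly_over R k" and "poly_over R rem" and div: "h = g * k + rem"
    and "rem = 0 \<or> degree rem < degree g"
    using poly_over_monic_division[OF g(1,2) h_over_R] by blast
  then have "degree rem < degree g" using \<open>degree g \<noteq> 0\<close> by auto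
  have "poly rem \<theta> = - poly k \<theta> * poly g \<theta>"
    using arg_cong[OF div, of "\<lambda>p. poly p \<theta>"] \<open>poly h \<theta> = 0\<close>
    by (simp add: algebra_simps eq_neg_iff_add_eq_0)
  then have "poly rem \<theta> \<in> J" using J_mult[OF g(3), of "- poly k \<theta>"] by simp
  show ?thesis
  proof (cases "\<forall>i. coeff (h - g * k) i \<in> \<mm>")
    case True
    have "lead_coeff k = 1 \<and> degree k \<ge> 1"
      using monic_division_quotient[OF h_monic g(2) div \<open>degree rem < degree g\<close> g(4)] .
    then have "poly_over R g \<and> poly_over R k \<and> lead_coeff g = 1 \<and> lead_coeff k = 1 \<and>
        degree g \<ge> 1 \<and> degree k \<ge> 1 \<and> (\<forall>i. coeff (h - g * k) i \<in> \<mm>)"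
      using g(1,2) k \<open>degree g \<noteq> 0\<close> True by auto
    then have False using h_irreducible unfolding irred_mod_max_def by blast
    then show ?thesis ..
  next
    case False
    then have "\<exists>i. coeff rem i \<notin> \<mm>" using div by simp
    then obtain p' where "poly_over R p'" "lead_coeff p' = 1" "degree p' \<le> degree rem" "poly p' \<theta> \<in> J"
      using monic_in_ideal_below[OF \<open>poly_over R rem\<close> \<open>poly rem \<theta> \<in> J\<close>] by blast
    moreover have "degree p' < degree g" using \<open>degree p' \<le> degree rem\<close> \<open>degree rem < degree g\<close> by simp
    ultimately show ?thesis by (intro that[of p'])
  qed
qed

lemma ext_ideal_maximal:
  assumes "1 \<notin> J"
  shows "J \<subseteq> \<MM>"
proof
  fix x assume "x \<in> J"
  obtain \<theta> where "poly h \<theta> = 0" and coords: "\<And>x. \<exists>p. poly_over R p \<and> degree p < degree h \<and> poly p \<theta> = x"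
    using quotient_root by blast
  obtain p where p: "poly_over R p" "degree p < degree h" "poly p \<theta> = x"
    using coords by blast
  have no_monic: "\<not> (poly_over R g \<and> lead_coeff g = 1 \<and> poly g \<theta> \<in> J \<and> degree g < degree h)" for g
  proof (induction "degree g" arbitrary: g rule: less_induct)
    case less
    show ?case
    proof
      assume g: "poly_over R g \<and> lead_coeff g = 1 \<and> poly g \<theta> \<in> J \<and> degree g < degree h"
      then obtain g' where "poly_over R g'" "lead_coeff g' = 1" "degree g' < degree g" "poly g' \<theta> \<in> J"
        using monic_in_ideal_descent[OF assms \<open>poly h \<theta> = 0\<close>, of g] by blast
      then show False using less.hyps[of g'] g by simp
    qed
  qed
  show "x \<in> \<MM>"
  proof (rule ccontr)
    assume "x \<notin> \<MM>"
    then have "\<exists>i. coeff p i \<notin> \<mm>" using poly_in_ext_ideal[of p \<theta>] p(3) by blast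
    then obtain p' where "poly_over R p'" "lead_coeff p' = 1" "degree p' \<le> degree p" "poly p' \<theta> \<in> J"
      using monic_in_ideal_below[OF p(1)] p(3) \<open>x \<in> J\<close> by blast
    then show False using no_monic[of p'] p(2) by simp
  qed
qed

end

lemma not_in_ext_ideal_unit: assumes "x \<notin> \<MM>" shows "x dvd 1"
proof (rule ccontr)
  assume not_unit: "\<not> x dvd 1"
  define J where "J = {y. \<exists>s. y - x * s \<in> \<MM>}"
  have "J \<subseteq> \<MM>"
  proof (rule ext_ideal_maximal)
    show "y + z \<in> J" if y: "y \<in> J" and z: "z \<in> J" for y z
    proof -
      obtain s t where "y - x * s \<in> \<MM>" "z - x * t \<in> \<MM>" using y z unfolding J_def by blast
      then have "(y - x * s) + (z - x * t) \<in> \<MM>" by (rule ext_ideal_add)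
      then have "(y + z) - x * (s + t) \<in> \<MM>" by (simp add: algebra_simps)
      then show ?thesis unfolding J_def by blast
    qed
    show "s * y \<in> J" if y: "y \<in> J" for y s
    proof -
      obtain t where "y - x * t \<in> \<MM>" using y unfolding J_def by blast
      then have "s * y - x * (s * t) \<in> \<MM>"
        using ext_ideal_mult_left[of "y - x * t" s] by (simp add: algebra_simps)
      then show ?thesis unfolding J_def by blast
    qed
    show "\<MM> \<subseteq> J"
    proof
      fix y assume "y \<in> \<MM>"
      then have "y - x * 0 \<in> \<MM>" by simp
      then show "y \<in> J" unfolding J_def by blast
    qed
    show "1 \<notin> J"
    proof
      assume "1 \<in> J"
      then obtain s where "1 - x * s \<in> \<MM>" unfolding J_def by blast
      then have "x * s - 1 \<in> \<MM>" using uminus_ext_ideal_iff[of "x * s - 1"] by simp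
      then show False using not_unit unit_if_inverse_mod_ext_ideal by blast
    qed
  qed
  moreover have "x \<in> J"
    using zero_in_ext_ideal unfolding J_def by (auto intro: exI[of _ 1])
  ultimately show False using assms by blast
qed

lemma ext_ideal_prime: assumes "x * y \<in> \<MM>" "x \<notin> \<MM>" shows "y \<in> \<MM>"
proof -
  obtain v where "1 = x * v" using not_in_ext_ideal_unit[OF assms(2)] by (rule dvdE)
  then show ?thesis using ext_ideal_unit_cancel[of x v y] assms(1) by simp
qed

lemma card_roots_mod_ext_ideal: "lead_coeff p = 1 \<Longrightarrow> card {y. poly p y \<in> \<MM>} \<le> degree p * card \<MM>"
proof (induction "degree p" arbitrary: p)
  case 0
  then have "poly p y = 1" for y by (simp add: poly_altdef)
  then show ?case using one_notin_ext_ideal by simp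
next
  case (Suc n)
  show ?case
  proof (cases "\<exists>y0. poly p y0 \<in> \<MM>")
    case False
    then show ?thesis by simp
  next
    case True
    then obtain y0 where y0: "poly p y0 \<in> \<MM>" by blast
    define p1 where "p1 = synthetic_div p y0"
    have p_eq: "p = [:- y0, 1:] * p1 + [:poly p y0:]"
      unfolding p1_def by (rule synthetic_div_correct'[symmetric])
    have "degree p1 = n" unfolding p1_def degree_synthetic_div using Suc.hyps(2) by simp
    moreover have "coeff p (Suc n) = coeff p1 n - y0 * coeff p1 (Suc n)"
      by (subst p_eq) (simp add: algebra_simps)
    ultimately have "lead_coeff p1 = 1" using Suc.prems Suc.hyps(2) by (simp add: coeff_eq_0)
    then have IH: "card {y. poly p1 y \<in> \<MM>} \<le> n * card \<MM>"
      using Suc.hyps(1)[of p1] \<open>degree p1 = n\<close> by simp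
    have "{y. poly p y \<in> \<MM>} \<subseteq> (\<lambda>z. y0 + z) ` \<MM> \<union> {y. poly p1 y \<in> \<MM>}"
    proof
      fix y assume "y \<in> {y. poly p y \<in> \<MM>}"
      moreover have "poly p y = (y - y0) * poly p1 y + poly p y0"
        by (subst p_eq) (simp add: algebra_simps)
      ultimately have "(y - y0) * poly p1 y \<in> \<MM>" using ext_ideal_diff[of "poly p y" "poly p y0"] y0 by simp
      then have "y - y0 \<in> \<MM> \<or> poly p1 y \<in> \<MM>" using ext_ideal_prime by blast
      then show "y \<in> (\<lambda>z. y0 + z) ` \<MM> \<union> {y. poly p1 y \<in> \<MM>}"
        by (auto intro: image_eqI[of _ _ "y - y0"])
    qed
    then have "card {y. poly p y \<in> \<MM>} \<le> card ((\<lambda>z. y0 + z) ` \<MM> \<union> {y. poly p1 y \<in> \<MM>})"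
      by (simp add: card_mono)
    also have "\<dots> \<le> card ((\<lambda>z. y0 + z) ` \<MM>) + card {y. poly p1 y \<in> \<MM>}"
      by (rule card_Un_le)
    also have "\<dots> \<le> card \<MM> + n * card \<MM>" using IH by (simp add: card_image)
    finally show ?thesis unfolding Suc.hyps(2)[symmetric] by simp
  qed
qed

lemma card_frobenius_fixed_mod_ext_ideal: "card {\<delta>. \<delta> ^ q - \<delta> \<in> \<MM>} \<le> q * card \<MM>"
proof -
  define p :: "'s poly" where "p = monom 1 q - [:0, 1:]"
  have coeff_p: "coeff p j = (if j = q then 1 else 0) - (if j = 1 then 1 else 0)" for j
    unfolding p_def by (auto simp: coeff_pCons split: nat.splits)
  have "degree p = q"
    using resfield_card_ge_2 nontrivial by (intro antisym degree_le le_degree) (auto simp: coeff_p)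
  moreover have "lead_coeff p = 1" using \<open>degree p = q\<close> resfield_card_ge_2 by (simp add: coeff_p)
  moreover have "poly p y = y ^ q - y" for y unfolding p_def by (simp add: poly_monom)
  ultimately show ?thesis using card_roots_mod_ext_ideal[of p] by simp
qed

end

section \<open>Skew evaluation\<close>

lemma Dop_0: "Dop \<sigma> a 0 \<gamma> = \<gamma>"
  by (simp add: Dop_def Nrm_def)

lemma Dop_add: "ring_aut \<sigma> \<Longrightarrow> Dop \<sigma> a i (x + y) = Dop \<sigma> a i x + Dop \<sigma> a i y"
  unfolding Dop_def by (simp add: ring_aut_add[OF ring_aut_funpow] algebra_simps)

lemma Dop_mult: "ring_aut \<sigma> \<Longrightarrow> Dop \<sigma> a i (c * x) = (\<sigma> ^^ i) c * Dop \<sigma> a i x"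
  unfolding Dop_def by (simp add: ring_aut_mult[OF ring_aut_funpow] algebra_simps)

lemma Dop_diff: "ring_aut \<sigma> \<Longrightarrow> Dop \<sigma> a i (x - y) = Dop \<sigma> a i x - Dop \<sigma> a i y"
  unfolding Dop_def by (simp add: ring_aut_diff[OF ring_aut_funpow] left_diff_distrib)

lemma Dop_Suc: "ring_aut \<sigma> \<Longrightarrow> Dop \<sigma> a (Suc i) \<gamma> = Dop \<sigma> a i (\<sigma> \<gamma> * a)"
  unfolding Dop_def Nrm_def
  by (simp add: ring_aut_mult[OF ring_aut_funpow] funpow_swap1 ac_simps)

text \<open>Coefficients are passed as a sequence with a degree bound, so that the quotient of a right
  division need not be packaged as a polynomial.\<close>

definition skew_eval_seq :: "('s::comm_ring_1 \<Rightarrow> 's) \<Rightarrow> (nat \<Rightarrow> 's) \<Rightarrow> nat \<Rightarrow> 's \<Rightarrow> 's \<Rightarrow> 's" where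
  "skew_eval_seq \<sigma> c d a \<gamma> = (\<Sum>k\<le>d. c k * Dop \<sigma> a k \<gamma>)"

lemma skew_eval_eq_seq: "skew_eval \<sigma> F a \<gamma> = skew_eval_seq \<sigma> (coeff F) (degree F) a \<gamma>"
  unfolding skew_eval_def skew_eval_seq_def ..

definition skew_quotient :: "('s::comm_ring_1 \<Rightarrow> 's) \<Rightarrow> (nat \<Rightarrow> 's) \<Rightarrow> nat \<Rightarrow> 's \<Rightarrow> nat \<Rightarrow> 's" where
  "skew_quotient \<sigma> c d b j = (\<Sum>k\<in>{Suc j..d}. c k * (\<Prod>t\<in>{Suc j..<k}. (\<sigma> ^^ t) b))"

lemma skew_quotient_top: "skew_quotient \<sigma> c d b d = 0"
  unfolding skew_quotient_def by simp

lemma skew_quotient_rec: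
  assumes "j < d"
  shows "skew_quotient \<sigma> c d b j = c (Suc j) + (\<sigma> ^^ Suc j) b * skew_quotient \<sigma> c d b (Suc j)"
proof -
  have split: "{Suc j..d} = insert (Suc j) {Suc (Suc j)..d}" using assms by auto
  have "c k * (\<Prod>t\<in>{Suc j..<k}. (\<sigma> ^^ t) b)
      = (\<sigma> ^^ Suc j) b * (c k * (\<Prod>t\<in>{Suc (Suc j)..<k}. (\<sigma> ^^ t) b))" if "Suc (Suc j) \<le> k" for k
  proof -
    have "{Suc j..<k} = insert (Suc j) {Suc (Suc j)..<k}" using that by auto
    then show ?thesis by (simp add: mult.left_commute)
  qed
  then show ?thesis
    unfolding skew_quotient_def split by (simp add: sum_distrib_left)
qed

lemma skew_quotient_lead: "skew_quotient \<sigma> c (Suc d) b d = c (Suc d)"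
  using skew_quotient_rec[of d "Suc d" \<sigma> c b] skew_quotient_top[of \<sigma> c "Suc d" b] by simp

text \<open>Right division \<open>F = G (x - b) + r\<close> in \<open>S[x;\<sigma>]\<close>, evaluated at \<open>\<gamma>\<close>: the factor \<open>x - b\<close> acts as
  \<open>\<gamma> \<mapsto> \<sigma> \<gamma> * a - b * \<gamma>\<close>.\<close>

lemma skew_eval_seq_right_division:
  assumes "ring_aut \<sigma>"
  shows "skew_eval_seq \<sigma> c (Suc d) a \<gamma>
    = skew_eval_seq \<sigma> (skew_quotient \<sigma> c (Suc d) b) d a (\<sigma> \<gamma> * a - b * \<gamma>)
      + (c 0 + skew_quotient \<sigma> c (Suc d) b 0 * b) * \<gamma>"
proof -
  define g where "g = skew_quotient \<sigma> c (Suc d) b"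
  define D where "D k = Dop \<sigma> a k \<gamma>" for k
  define sb where "sb k = (\<sigma> ^^ k) b" for k
  have c_eq: "c (Suc j) = g j - sb (Suc j) * g (Suc j)" if "j \<le> d" for j
    unfolding g_def sb_def using skew_quotient_rec[of j "Suc d" \<sigma> c b] that by simp
  have "Dop \<sigma> a j (\<sigma> \<gamma> * a - b * \<gamma>) = D (Suc j) - sb j * D j" for j
    unfolding D_def sb_def using assms by (simp only: Dop_diff Dop_Suc Dop_mult)
  then have "skew_eval_seq \<sigma> g d a (\<sigma> \<gamma> * a - b * \<gamma>) = (\<Sum>j\<le>d. g j * D (Suc j) - sb j * g j * D j)"
    unfolding skew_eval_seq_def by (simp add: right_diff_distrib ac_simps)
  also have "\<dots> = (\<Sum>j\<le>d. g j * D (Suc j)) - (\<Sum>j\<le>d. sb j * g j * D j)"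
    by (rule sum_subtractf)
  also have "(\<Sum>j\<le>d. sb j * g j * D j) = (\<Sum>j\<le>d. sb (Suc j) * g (Suc j) * D (Suc j)) + b * g 0 * \<gamma>"
    using sum.atMost_Suc_shift[of "\<lambda>k. sb k * g k * D k" d] skew_quotient_top[of \<sigma> c "Suc d" b]
    by (simp add: g_def sb_def D_def Dop_0)
  finally have "skew_eval_seq \<sigma> g d a (\<sigma> \<gamma> * a - b * \<gamma>)
      = (\<Sum>j\<le>d. c (Suc j) * D (Suc j)) - b * g 0 * \<gamma>"
    by (simp add: c_eq algebra_simps sum_subtractf)
  moreover have "skew_eval_seq \<sigma> c (Suc d) a \<gamma> = c 0 * D 0 + (\<Sum>j\<le>d. c (Suc j) * D (Suc j))"
    unfolding skew_eval_seq_def D_def by (rule sum.atMost_Suc_shift)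
  moreover have "D 0 = \<gamma>" unfolding D_def by (rule Dop_0)
  ultimately show ?thesis unfolding g_def by (simp add: algebra_simps)
qed

text \<open>In the notation \<open>y\<^sup>\<beta> = \<sigma>(\<beta>) y \<beta>\<^sup>-\<^sup>1\<close>: \<open>x - y\<^sup>\<beta>\<close> is a unit for every unit \<open>\<beta>\<close>.\<close>

definition sigma_separated :: "('s::comm_ring_1 \<Rightarrow> 's) \<Rightarrow> 's \<Rightarrow> 's \<Rightarrow> bool" where
  "sigma_separated \<sigma> x y \<longleftrightarrow> (\<forall>\<beta> \<gamma>. \<beta> * \<gamma> = 1 \<longrightarrow> (x - \<sigma> \<beta> * y * \<gamma>) dvd 1)"

lemma sigma_separated_sym:
  assumes \<sigma>: "ring_aut \<sigma>" and sep: "sigma_separated \<sigma> x y"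
  shows "sigma_separated \<sigma> y x"
  unfolding sigma_separated_def
proof (intro allI impI)
  fix \<beta> \<gamma> :: 'a assume \<beta>\<gamma>: "\<beta> * \<gamma> = 1"
  have "\<sigma> \<beta> * \<sigma> \<gamma> = 1" by (rule ring_aut_unit[OF \<sigma> \<beta>\<gamma>])
  then have "y - \<sigma> \<beta> * x * \<gamma> = - \<sigma> \<beta> * (x - \<sigma> \<gamma> * y * \<beta>) * \<gamma>"
    using \<beta>\<gamma> by (simp add: algebra_simps) (metis mult.assoc mult.commute mult_1_right)
  moreover have "(x - \<sigma> \<gamma> * y * \<beta>) dvd 1"
    using sep \<beta>\<gamma> unfolding sigma_separated_def by (simp add: mult.commute)
  moreover have "\<sigma> \<beta> dvd 1" "\<gamma> dvd 1"
    using \<open>\<sigma> \<beta> * \<sigma> \<gamma> = 1\<close> \<beta>\<gamma> unfolding dvd_def by (metis mult.commute)+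
  ultimately show "(y - \<sigma> \<beta> * x * \<gamma>) dvd 1"
    using mult_dvd_mono[OF mult_dvd_mono, of "\<sigma> \<beta>" 1 _ 1 \<gamma> 1] by simp
qed

section \<open>Counting preimages\<close>

locale skew_galois = galois_ring R h for R :: "'s::{comm_ring_1, finite} set" and h +
  fixes \<sigma> :: "'s \<Rightarrow> 's"
  assumes galois_generator: "galois_generator R \<sigma>"
begin

lemma sigma_aut: "ring_aut \<sigma>"
  and sigma_fixes_R: "r \<in> R \<Longrightarrow> \<sigma> r = r"
  and sigma_frobenius: "\<sigma> y - y ^ q \<in> \<MM>"
  using galois_generator by (simp_all add: galois_generator_def)

lemma sigma_power_fixes_R: "r \<in> R \<Longrightarrow> (\<sigma> ^^ k) r = r"
  by (induction k) (auto simp: sigma_fixes_R)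

lemma Dop_R_mult: "r \<in> R \<Longrightarrow> Dop \<sigma> a i (r * x) = r * Dop \<sigma> a i x"
  using Dop_mult[OF sigma_aut] sigma_power_fixes_R by simp

lemma Dop_ext_ideal: "x \<in> \<MM> \<Longrightarrow> Dop \<sigma> a i x \<in> \<MM>"
  unfolding Dop_def
  using ring_aut_fixing_ext_ideal[OF ring_aut_funpow[OF sigma_aut]] sigma_power_fixes_R
  by (blast intro: ext_ideal_mult_right)

definition skew_preimage :: "(nat \<Rightarrow> 's) \<Rightarrow> nat \<Rightarrow> 's \<Rightarrow> 's set" where
  "skew_preimage c d a = {\<gamma>. skew_eval_seq \<sigma> c d a \<gamma> \<in> \<MM>}"

lemma ext_ideal_subset_skew_preimage: "\<MM> \<subseteq> skew_preimage c d a"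
  unfolding skew_preimage_def skew_eval_seq_def
  by (blast intro: ext_ideal_sum ext_ideal_mult_left Dop_ext_ideal)

lemma skew_preimage_add:
  "x \<in> skew_preimage c d a \<Longrightarrow> y \<in> skew_preimage c d a \<Longrightarrow> x + y \<in> skew_preimage c d a"
  unfolding skew_preimage_def skew_eval_seq_def
  by (simp add: Dop_add[OF sigma_aut] distrib_left sum.distrib ext_ideal_add)

lemma skew_preimage_R_mult:
  "r \<in> R \<Longrightarrow> x \<in> skew_preimage c d a \<Longrightarrow> r * x \<in> skew_preimage c d a"
  unfolding skew_preimage_def skew_eval_seq_def
  by (simp add: Dop_R_mult mult.left_commute ext_ideal_mult_left flip: sum_distrib_left)

text \<open>Conjugating by \<open>\<beta>\<close> and \<open>\<gamma>\<close> would give \<open>y \<equiv> x\<^sup>\<epsilon>\<close> modulo \<open>\<MM>\<close> with \<open>\<epsilon> = \<beta>\<^sup>-\<^sup>1\<gamma>\<close> if \<open>\<gamma>\<close> were a unit.\<close>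

lemma twisted_kernel_separated:
  assumes sep: "sigma_separated \<sigma> y x" and \<beta>: "\<beta> * \<beta>' = 1"
    and ker: "\<sigma> \<gamma> * x - \<sigma> \<beta> * y * \<beta>' * \<gamma> \<in> \<MM>"
  shows "\<gamma> \<in> \<MM>"
proof (rule ccontr)
  assume "\<gamma> \<notin> \<MM>"
  then obtain \<gamma>' where "1 = \<gamma> * \<gamma>'" using not_in_ext_ideal_unit by (blast elim: dvdE)
  then have \<gamma>: "\<gamma> * \<gamma>' = 1" ..
  define \<epsilon> where "\<epsilon> = \<beta>' * \<gamma>"
  define \<epsilon>' where "\<epsilon>' = \<gamma>' * \<beta>"
  have "\<epsilon> * \<epsilon>' = (\<beta> * \<beta>') * (\<gamma> * \<gamma>')" unfolding \<epsilon>_def \<epsilon>'_def by (simp add: ac_simps)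
  then have \<epsilon>: "\<epsilon> * \<epsilon>' = 1" using \<beta> \<gamma> by simp
  have "\<sigma> \<beta>' * (\<sigma> \<gamma> * x) * \<epsilon>' = \<sigma> \<epsilon> * x * \<epsilon>'"
    unfolding \<epsilon>_def ring_aut_mult[OF sigma_aut] by (simp add: ac_simps)
  moreover have "\<sigma> \<beta>' * (\<sigma> \<beta> * y * \<beta>' * \<gamma>) * \<epsilon>'
      = (\<sigma> \<beta> * \<sigma> \<beta>') * y * (\<beta> * \<beta>') * (\<gamma> * \<gamma>')"
    unfolding \<epsilon>'_def by (simp add: ac_simps)
  moreover have "\<sigma> \<beta> * \<sigma> \<beta>' = 1" by (rule ring_aut_unit[OF sigma_aut \<beta>])
  ultimately have "\<sigma> \<beta>' * (\<sigma> \<gamma> * x - \<sigma> \<beta> * y * \<beta>' * \<gamma>) * \<epsilon>' = \<sigma> \<epsilon> * x * \<epsilon>' - y"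
    using \<beta> \<gamma> by (simp add: right_diff_distrib left_diff_distrib)
  moreover have "\<sigma> \<beta>' * (\<sigma> \<gamma> * x - \<sigma> \<beta> * y * \<beta>' * \<gamma>) * \<epsilon>' \<in> \<MM>"
    using ker by (intro ext_ideal_mult_left ext_ideal_mult_right)
  ultimately have "- (y - \<sigma> \<epsilon> * x * \<epsilon>') \<in> \<MM>" by simp
  then have "y - \<sigma> \<epsilon> * x * \<epsilon>' \<in> \<MM>" by (simp only: uminus_ext_ideal_iff)
  moreover have "(y - \<sigma> \<epsilon> * x * \<epsilon>') dvd 1" using sep \<epsilon> unfolding sigma_separated_def by blast
  ultimately show False using unit_notin_ext_ideal by blast
qed

text \<open>Writing \<open>\<gamma> = \<delta> \<beta>\<close>, the condition becomes \<open>\<sigma> \<delta> \<equiv> \<delta>\<close>, that is \<open>\<delta>\<^sup>q \<equiv> \<delta>\<close>, modulo \<open>\<MM>\<close>.\<close>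

lemma card_twisted_kernel_le:
  assumes "y dvd 1" and \<beta>: "\<beta> * \<beta>' = 1"
  shows "card {\<gamma>. \<sigma> \<gamma> * y - \<sigma> \<beta> * y * \<beta>' * \<gamma> \<in> \<MM>} \<le> q * card \<MM>"
proof -
  obtain y' where "1 = y * y'" using assms(1) by (rule dvdE)
  moreover have "(\<sigma> \<beta>' * y') * (\<sigma> \<beta> * y) = (\<sigma> \<beta> * \<sigma> \<beta>') * (y * y')" by (simp add: ac_simps)
  ultimately have unit: "(\<sigma> \<beta>' * y') * (\<sigma> \<beta> * y) = 1" using ring_aut_unit[OF sigma_aut \<beta>] by simp
  define Y where "Y = {\<delta>. \<delta> ^ q - \<delta> \<in> \<MM>}"
  have "{\<gamma>. \<sigma> \<gamma> * y - \<sigma> \<beta> * y * \<beta>' * \<gamma> \<in> \<MM>} \<subseteq> (\<lambda>\<delta>. \<delta> * \<beta>) ` Y"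
  proof
    fix \<gamma> assume "\<gamma> \<in> {\<gamma>. \<sigma> \<gamma> * y - \<sigma> \<beta> * y * \<beta>' * \<gamma> \<in> \<MM>}"
    then have ker: "\<sigma> \<gamma> * y - \<sigma> \<beta> * y * \<beta>' * \<gamma> \<in> \<MM>" by simp
    define \<delta> where "\<delta> = \<gamma> * \<beta>'"
    have "\<gamma> * \<beta>' * \<beta> = \<gamma> * (\<beta> * \<beta>')" by (simp add: ac_simps)
    then have \<gamma>_eq: "\<gamma> = \<delta> * \<beta>" unfolding \<delta>_def using \<beta> by simp
    have "\<sigma> \<gamma> = \<sigma> \<delta> * \<sigma> \<beta>" unfolding \<gamma>_eq by (rule ring_aut_mult[OF sigma_aut])
    moreover have "\<sigma> \<beta> * y * \<beta>' * \<gamma> = \<sigma> \<beta> * y * \<delta>" unfolding \<delta>_def by (simp add: ac_simps)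
    ultimately have "(\<sigma> \<beta> * y) * (\<sigma> \<delta> - \<delta>) \<in> \<MM>" using ker by (simp add: algebra_simps)
    then have "\<sigma> \<delta> - \<delta> \<in> \<MM>" by (rule ext_ideal_unit_cancel[rotated]) (rule unit[unfolded mult.commute[of _ "\<sigma> \<beta> * y"]])
    then have "(\<sigma> \<delta> - \<delta>) - (\<sigma> \<delta> - \<delta> ^ q) \<in> \<MM>" using sigma_frobenius ext_ideal_diff by blast
    then have "\<delta> \<in> Y" unfolding Y_def by simp
    then show "\<gamma> \<in> (\<lambda>\<delta>. \<delta> * \<beta>) ` Y" using \<gamma>_eq by blast
  qed
  then have "card {\<gamma>. \<sigma> \<gamma> * y - \<sigma> \<beta> * y * \<beta>' * \<gamma> \<in> \<MM>} \<le> card ((\<lambda>\<delta>. \<delta> * \<beta>) ` Y)"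
    by (simp add: card_mono)
  also have "\<dots> \<le> card Y" by (rule card_image_le) simp
  also have "\<dots> \<le> q * card \<MM>" unfolding Y_def by (rule card_frobenius_fixed_mod_ext_ideal)
  finally show ?thesis .
qed

lemma skew_preimage_right_division:
  assumes "\<beta> \<in> skew_preimage c (Suc d) y" and \<beta>: "\<beta> * \<beta>' = 1" and b: "b = \<sigma> \<beta> * y * \<beta>'"
  shows "skew_preimage c (Suc d) x
    = {\<gamma>. \<sigma> \<gamma> * x - b * \<gamma> \<in> skew_preimage (skew_quotient \<sigma> c (Suc d) b) d x}"
proof -
  define g where "g = skew_quotient \<sigma> c (Suc d) b"
  define r where "r = c 0 + g 0 * b"
  have div: "skew_eval_seq \<sigma> c (Suc d) x' \<gamma> = skew_eval_seq \<sigma> g d x' (\<sigma> \<gamma> * x' - b * \<gamma>) + r * \<gamma>"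
    for x' \<gamma> unfolding g_def r_def by (rule skew_eval_seq_right_division[OF sigma_aut])
  have "b * \<beta> = \<sigma> \<beta> * y * (\<beta> * \<beta>')" unfolding b by (simp add: ac_simps)
  then have "\<sigma> \<beta> * y - b * \<beta> = 0" using \<beta> by simp
  then have "skew_eval_seq \<sigma> c (Suc d) y \<beta> = skew_eval_seq \<sigma> g d y 0 + r * \<beta>" using div by simp
  moreover have "skew_eval_seq \<sigma> g d y 0 \<in> \<MM>"
    using ext_ideal_subset_skew_preimage zero_in_ext_ideal unfolding skew_preimage_def by blast
  ultimately have "\<beta> * r \<in> \<MM>"
    using assms(1) add_ext_ideal_iff unfolding skew_preimage_def by (simp add: add.commute mult.commute)
  then have "r \<in> \<MM>" using \<beta> by (rule ext_ideal_unit_cancel[rotated])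
  then show ?thesis
    unfolding skew_preimage_def div g_def[symmetric] using add_ext_ideal_iff ext_ideal_mult_right by simp
qed

lemma card_skew_preimage_right_division:
  assumes "\<beta> \<in> skew_preimage c (Suc d) y" and "\<beta> * \<beta>' = 1" and "b = \<sigma> \<beta> * y * \<beta>'"
  shows "card (skew_preimage c (Suc d) x) * card \<MM>
    \<le> card (skew_preimage (skew_quotient \<sigma> c (Suc d) b) d x) * card {\<gamma>. \<sigma> \<gamma> * x - b * \<gamma> \<in> \<MM>}"
  unfolding skew_preimage_right_division[OF assms]
proof (rule card_preimage_mult_card_ext_ideal_le)
  show "\<sigma> (\<gamma> + \<gamma>') * x - b * (\<gamma> + \<gamma>') = (\<sigma> \<gamma> * x - b * \<gamma>) + (\<sigma> \<gamma>' * x - b * \<gamma>')" for \<gamma> \<gamma>'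
    by (simp add: ring_aut_add[OF sigma_aut] algebra_simps)
  show "w + \<mu> \<in> skew_preimage (skew_quotient \<sigma> c (Suc d) b) d x"
    if "w \<in> skew_preimage (skew_quotient \<sigma> c (Suc d) b) d x" "\<mu> \<in> \<MM>" for w \<mu>
    using that skew_preimage_add ext_ideal_subset_skew_preimage by blast
qed

lemma card_skew_preimage_division_same:
  assumes "\<beta> \<in> skew_preimage c (Suc d) y" and \<beta>: "\<beta> * \<beta>' = 1" and b: "b = \<sigma> \<beta> * y * \<beta>'"
    and "y dvd 1"
  shows "card (skew_preimage c (Suc d) y) \<le> card (skew_preimage (skew_quotient \<sigma> c (Suc d) b) d y) * q"
proof -
  have "card {\<gamma>. \<sigma> \<gamma> * y - b * \<gamma> \<in> \<MM>} \<le> q * card \<MM>"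
    unfolding b using card_twisted_kernel_le[OF \<open>y dvd 1\<close> \<beta>] .
  then have "card (skew_preimage c (Suc d) y) * card \<MM>
      \<le> card (skew_preimage (skew_quotient \<sigma> c (Suc d) b) d y) * (q * card \<MM>)"
    using card_skew_preimage_right_division[OF assms(1-3), of y] mult_le_mono2 order_trans by blast
  then show ?thesis using card_ext_ideal_pos by (simp add: mult.assoc[symmetric])
qed

lemma card_skew_preimage_division_separated:
  assumes "\<beta> \<in> skew_preimage c (Suc d) y" and \<beta>: "\<beta> * \<beta>' = 1" and b: "b = \<sigma> \<beta> * y * \<beta>'"
    and sep: "sigma_separated \<sigma> y x"
  shows "card (skew_preimage c (Suc d) x) \<le> card (skew_preimage (skew_quotient \<sigma> c (Suc d) b) d x)"
proof -
  have "{\<gamma>. \<sigma> \<gamma> * x - b * \<gamma> \<in> \<MM>} \<subseteq> \<MM>"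
    using twisted_kernel_separated[OF sep \<beta>] unfolding b by blast
  then have "card {\<gamma>. \<sigma> \<gamma> * x - b * \<gamma> \<in> \<MM>} \<le> card \<MM>" by (simp add: card_mono)
  then have "card (skew_preimage c (Suc d) x) * card \<MM>
      \<le> card (skew_preimage (skew_quotient \<sigma> c (Suc d) b) d x) * card \<MM>"
    using card_skew_preimage_right_division[OF assms(1-3), of x] mult_le_mono2 order_trans by blast
  then show ?thesis using card_ext_ideal_pos by simp
qed

lemma prod_card_skew_preimage_le:
  assumes "finite I" and units: "\<forall>i\<in>I. a i dvd 1"
    and separated: "\<forall>i\<in>I. \<forall>j\<in>I. i \<noteq> j \<longrightarrow> sigma_separated \<sigma> (a i) (a j)"
  shows "c d = 1 \<Longrightarrow> (\<Prod>i\<in>I. card (skew_preimage c d (a i))) \<le> card \<MM> ^ card I * q ^ d"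
proof (induction d arbitrary: c)
  case 0
  then have "skew_preimage c 0 (a i) = \<MM>" for i
    unfolding skew_preimage_def skew_eval_seq_def by (simp add: Dop_0)
  then show ?case by simp
next
  case (Suc d)
  show ?case
  proof (cases "\<forall>i\<in>I. skew_preimage c (Suc d) (a i) \<subseteq> \<MM>")
    case True
    then have "(\<Prod>i\<in>I. card (skew_preimage c (Suc d) (a i))) \<le> (\<Prod>i\<in>I. card \<MM>)"
      by (intro prod_mono) (simp add: card_mono)
    also have "\<dots> \<le> card \<MM> ^ card I * q ^ Suc d" using resfield_card_ge_2 by simp
    finally show ?thesis .
  next
    case False
    then obtain i0 \<beta> where i0: "i0 \<in> I" and \<beta>: "\<beta> \<in> skew_preimage c (Suc d) (a i0)" "\<beta> \<notin> \<MM>"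
      by blast
    obtain \<beta>' where "1 = \<beta> * \<beta>'" using not_in_ext_ideal_unit[OF \<beta>(2)] by (rule dvdE)
    then have \<beta>': "\<beta> * \<beta>' = 1" ..
    define b where "b = \<sigma> \<beta> * a i0 * \<beta>'"
    define g where "g = skew_quotient \<sigma> c (Suc d) b"
    have factor: "card (skew_preimage c (Suc d) (a i))
        \<le> card (skew_preimage g d (a i)) * (if i = i0 then q else 1)" if "i \<in> I" for i
    proof (cases "i = i0")
      case True
      then show ?thesis
        using card_skew_preimage_division_same[OF \<beta>(1) \<beta>' b_def] units i0 unfolding g_def by simp
    next
      case False
      then have "sigma_separated \<sigma> (a i0) (a i)" using separated i0 \<open>i \<in> I\<close> by auto
      then show ?thesis
        using card_skew_preimage_division_separated[OF \<beta>(1) \<beta>' b_def] False unfolding g_def by simp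
    qed
    have "(\<Prod>i\<in>I. card (skew_preimage c (Suc d) (a i)))
        \<le> (\<Prod>i\<in>I. card (skew_preimage g d (a i)) * (if i = i0 then q else 1))"
      by (intro prod_mono) (simp add: factor)
    also have "\<dots> = (\<Prod>i\<in>I. card (skew_preimage g d (a i))) * q"
      using \<open>finite I\<close> i0 by (simp add: prod.distrib prod.delta)
    also have "\<dots> \<le> card \<MM> ^ card I * q ^ d * q"
      using Suc.IH[of g] skew_quotient_lead[of \<sigma> c d b] Suc.prems unfolding g_def by simp
    also have "\<dots> = card \<MM> ^ card I * q ^ Suc d" by (simp add: ac_simps)
    finally show ?thesis .
  qed
qed

lemma sum_frk_skew_preimage_le:
  assumes "finite I" and "\<forall>i\<in>I. a i dvd 1"
    and "\<forall>i\<in>I. \<forall>j\<in>I. i \<noteq> j \<longrightarrow> sigma_separated \<sigma> (a i) (a j)" and "c d = 1"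
  shows "(\<Sum>i\<in>I. frk R (skew_preimage c d (a i))) \<le> d"
proof -
  define n where "n i = frk R (skew_preimage c d (a i))" for i
  have lower: "card \<MM> * q ^ n i \<le> card (skew_preimage c d (a i))" for i
  proof -
    obtain A where A: "A \<subseteq> skew_preimage c d (a i)" "R_indep R A" "card A = n i"
      using frk_attained unfolding n_def by blast
    have "card \<MM> * q ^ card A \<le> card (skew_preimage c d (a i))"
      by (rule card_submodule_ge[OF ext_ideal_subset_skew_preimage skew_preimage_add skew_preimage_R_mult A(1,2)])
    then show ?thesis using A(3) by simp
  qed
  have "card \<MM> ^ card I * q ^ (\<Sum>i\<in>I. n i) = (\<Prod>i\<in>I. card \<MM> * q ^ n i)"
    by (simp add: prod.distrib power_sum)
  also have "\<dots> \<le> (\<Prod>i\<in>I. card (skew_preimage c d (a i)))"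
    by (rule prod_mono) (simp add: lower)
  also have "\<dots> \<le> card \<MM> ^ card I * q ^ d"
    using prod_card_skew_preimage_le[OF assms(1-3), where c = c and d = d] assms(4) by blast
  finally have "q ^ (\<Sum>i\<in>I. n i) \<le> q ^ d"
    using card_ext_ideal_pos by (simp only: mult_le_cancel1 zero_less_power)
  moreover have "1 < q" using resfield_card_ge_2 by simp
  ultimately show ?thesis unfolding n_def using power_le_imp_le_exp by blast
qed

end

theorem theorem1:
  fixes R :: "'s::{comm_ring_1, finite} set"
    and h :: "'s poly"
    and \<sigma> :: "'s \<Rightarrow> 's"
    and a :: "nat \<Rightarrow> 's"
    and l :: nat
    and F :: "'s poly"
  assumes "finite_chain_ring R"
    and "poly_over R h" and "lead_coeff h = 1" and "irred_mod_max R h"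
    and "is_quotient_by R h"
    and "galois_generator R \<sigma>"
    and "\<forall>i\<in>{1..l}. a i dvd 1"
    and "\<forall>i j \<beta> \<gamma>. 1 \<le> i \<and> i < j \<and> j \<le> l \<and> \<beta> * \<gamma> = 1 \<longrightarrow>
           (a i - \<sigma> \<beta> * a j * \<gamma>) dvd 1"
    and "lead_coeff F = 1"
  shows "(\<Sum>i=1..l. frk R {\<beta>. skew_eval \<sigma> F (a i) \<beta> \<in> ext_ideal R}) \<le> degree F"
proof -
  interpret skew_galois R h \<sigma>
    using assms(1-6) by unfold_locales
  have "sigma_separated \<sigma> (a i) (a j)" if "i \<in> {1..l}" "j \<in> {1..l}" "i < j" for i j
    using assms(8) that unfolding sigma_separated_def by auto
  then have "\<forall>i\<in>{1..l}. \<forall>j\<in>{1..l}. i \<noteq> j \<longrightarrow> sigma_separated \<sigma> (a i) (a j)"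
    using sigma_separated_sym[OF sigma_aut] by (meson linorder_neq_iff)
  moreover have "{\<beta>. skew_eval \<sigma> F (a i) \<beta> \<in> ext_ideal R} = skew_preimage (coeff F) (degree F) (a i)" for i
    unfolding skew_preimage_def skew_eval_eq_seq ..
  ultimately show ?thesis
    using sum_frk_skew_preimage_le[of "{1..l}" a "coeff F" "degree F"] assms(7,9) by simp
qed

end
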